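(* Let $\{\rho_\theta : \theta=(\theta^1,\theta^2)\in\Theta\}$ be a two-parameter qubit model satisfying the regularity conditions, let $\theta\in\Theta$, and let $W$ be a $2\times 2$ real symmetric positive definite weight matrix. Then the Holevo bound is \[ C_\theta^H[W]= \begin{cases} C_\theta^R[W] & \text{if } C_\theta^R[W]\ge \tfrac{1}{2}\big(C_\theta^Z[W]+C_\theta^S[W]\big),\\[1ex] C_\theta^R[W]+S_\theta[W] & \text{otherwise}, \end{cases} \] where the nonnegative quantity $S_\theta[W]$ is \[ S_\theta[W]:=\frac{\Big[\tfrac{1}{2}\big(C_\theta^Z[W]+C_\theta^S[W]\big)-C_\theta^R[W]\Big]^2}{C_\theta^Z[W]-C_\theta^R[W]}. \]
   Context: A two-parameter qubit model is a family of density matrices $\rho_\theta$ on $\mathbb{C}^2$ indexed by $\theta=(\theta^1,\theta^2)$ in an open set $\Theta\subset\mathbb{R}^2$. Regularity conditions: each $\rho_\theta$ is strictly positive (full rank); $\theta\mapsto\rho_\theta$ is sufficiently smooth; the partial derivatives $\partial_1\rho_\theta,\partial_2\rho_\theta$ ($\partial_i=\partial/\partial\theta^i$) are linearly independent. The SLD operators $L_{\theta,i}$ are the hermitian solutions of $\partial_i\rho_\theta=\tfrac12(\rho_\theta L_{\theta,i}+L_{\theta,i}\rho_\theta)$; the RLD operators $\tilde L_{\theta,i}$ are defined by $\partial_i\rho_\theta=\rho_\theta\tilde L_{\theta,i}$. The SLD Fisher information matrix is $G_\theta=[g_{\theta,ij}]$ with $g_{\theta,ij}=\mathrm{tr}\big(\rho_\theta\tfrac12(L_{\theta,i}L_{\theta,j}+L_{\theta,j}L_{\theta,i})\big)$;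 the RLD Fisher information matrix is $\tilde G_\theta=[\tilde g_{\theta,ij}]$ with $\tilde g_{\theta,ij}=\mathrm{tr}(\rho_\theta\tilde L_{\theta,j}\tilde L_{\theta,i}^* )$. The SLD dual operators are $L_\theta^i=\sum_j (G_\theta^{-1})^{ji}L_{\theta,j}$, and $Z_\theta=[z_\theta^{ij}]_{i,j\in\{1,2\}}$ with $z_\theta^{ij}=\mathrm{tr}(\rho_\theta L_\theta^jL_\theta^i)$ (a hermitian matrix). $\mathrm{Re}\,\tilde G_\theta^{-1}$, $\mathrm{Im}\,\tilde G_\theta^{-1}$ denote the entrywise real/imaginary parts of the inverse matrix $\tilde G_\theta^{-1}$. For a diagonalizable matrix $X=T\,\mathrm{diag}(\lambda_1,\dots,\lambda_m)T^{-1}$, $\mathrm{TrAbs}\,X:=\sum_j|\lambda_j|$. The three bounds are $C_\theta^S[W]=\mathrm{Tr}(WG_\theta^{-1})$, $C_\theta^R[W]=\mathrm{Tr}(W\,\mathrm{Re}\,\tilde G_\theta^{-1})+\mathrm{TrAbs}(W\,\mathrm{Im}\,\tilde G_\theta^{-1})$, and $C_\theta^Z[W]=\mathrm{Tr}(W\,\mathrm{Re}\,Z_\theta)+\mathrm{TrAbs}(W\,\mathrm{Im}\,Z_\theta)$. The Holevo bound is $C_\theta^H[W]=\min_{\vec X\in\mathcal X_\theta}h_\theta[\vec X|W]$, where $\mathcal X_\theta$ is the set of pairs $\vec X=(X^1,X^2)$ of hermitian operators with $\mathrm{tr}(\rho_\theta X^i)=0$ and $\mathrm{tr}(\partial_i\rho_\theta\,X^j)=\delta^j_i$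 for all $i,j$, and $h_\theta[\vec X|W]=\mathrm{Tr}(W\,\mathrm{Re}\,Z_\theta[\vec X])+\mathrm{TrAbs}(W\,\mathrm{Im}\,Z_\theta[\vec X])$ with $Z_\theta[\vec X]=[\mathrm{tr}(\rho_\theta X^jX^i)]_{i,j}$. *)

theory Defs
  imports "HOL-Analysis.Analysis"
begin

type_synonym cmat = "complex^2^2"
type_synonym rmat = "real^2^2"

definition cadj :: "complex^'n^'n \<Rightarrow> complex^'n^'n" where
  "cadj A = (\<chi> i j. cnj (A $ j $ i))"

definition hermitian :: "complex^'n^'n \<Rightarrow> bool" where
  "hermitian A \<longleftrightarrow> cadj A = A"

definition strictly_positive :: "complex^'n^'n \<Rightarrow> bool" where
  "strictly_positive A \<longleftrightarrow> hermitian A \<and>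
     (\<forall>v::complex^'n. v \<noteq> 0 \<longrightarrow> 0 < Re (\<Sum>i\<in>UNIV. cnj (v $ i) * (A *v v) $ i))"

definition ReM :: "complex^'n^'m \<Rightarrow> real^'n^'m" where
  "ReM A = (\<chi> i j. Re (A $ i $ j))"
definition ImM :: "complex^'n^'m \<Rightarrow> real^'n^'m" where
  "ImM A = (\<chi> i j. Im (A $ i $ j))"
definition ofRM :: "real^'n^'m \<Rightarrow> complex^'n^'m" where
  "ofRM A = (\<chi> i j. complex_of_real (A $ i $ j))"

definition diag_mat :: "complex^'n \<Rightarrow> complex^'n^'n" where
  "diag_mat d = (\<chi> i j. if i = j then d $ i else 0)"

definition TrAbs :: "complex^'n^'n \<Rightarrow> real" where
  "TrAbs X = (THE s. \<exists>(T::complex^'n^'n) d. invertible T \<and> X = T ** diag_mat d ** matrix_inv T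
                         \<and> s = (\<Sum>j\<in>UNIV. cmod (d $ j)))"

definition pder :: "(real^2 \<Rightarrow> cmat) \<Rightarrow> real^2 \<Rightarrow> 2 \<Rightarrow> cmat" where
  "pder rho \<theta> i = frechet_derivative rho (at \<theta>) (axis i 1)"

definition SLD :: "(real^2 \<Rightarrow> cmat) \<Rightarrow> real^2 \<Rightarrow> 2 \<Rightarrow> cmat" where
  "SLD rho \<theta> i = (THE L. hermitian L \<and>
      pder rho \<theta> i = (1/2::real) *\<^sub>R (rho \<theta> ** L + L ** rho \<theta>))"

definition RLD :: "(real^2 \<Rightarrow> cmat) \<Rightarrow> real^2 \<Rightarrow> 2 \<Rightarrow> cmat" where
  "RLD rho \<theta> i = (THE L. pder rho \<theta> i = rho \<theta> ** L)"

text \<open>SLD Fisher information (its entries are real; Re is the identity on them).\<close>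
definition SLD_Fisher :: "(real^2 \<Rightarrow> cmat) \<Rightarrow> real^2 \<Rightarrow> rmat" where
  "SLD_Fisher rho \<theta> = (\<chi> i j. Re (trace (rho \<theta> **
      ((1/2::real) *\<^sub>R (SLD rho \<theta> i ** SLD rho \<theta> j + SLD rho \<theta> j ** SLD rho \<theta> i)))))"

definition RLD_Fisher :: "(real^2 \<Rightarrow> cmat) \<Rightarrow> real^2 \<Rightarrow> cmat" where
  "RLD_Fisher rho \<theta> = (\<chi> i j. trace (rho \<theta> ** RLD rho \<theta> j ** cadj (RLD rho \<theta> i)))"

definition SLD_dual :: "(real^2 \<Rightarrow> cmat) \<Rightarrow> real^2 \<Rightarrow> 2 \<Rightarrow> cmat" where
  "SLD_dual rho \<theta> i = (\<Sum>j\<in>UNIV. matrix_inv (SLD_Fisher rho \<theta>) $ j $ i *\<^sub>R SLD rho \<theta> j)"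

definition Zmat :: "(real^2 \<Rightarrow> cmat) \<Rightarrow> real^2 \<Rightarrow> cmat" where
  "Zmat rho \<theta> = (\<chi> i j. trace (rho \<theta> ** SLD_dual rho \<theta> j ** SLD_dual rho \<theta> i))"

definition CS :: "(real^2 \<Rightarrow> cmat) \<Rightarrow> real^2 \<Rightarrow> rmat \<Rightarrow> real" where
  "CS rho \<theta> W = trace (W ** matrix_inv (SLD_Fisher rho \<theta>))"

definition CR :: "(real^2 \<Rightarrow> cmat) \<Rightarrow> real^2 \<Rightarrow> rmat \<Rightarrow> real" where
  "CR rho \<theta> W = trace (W ** ReM (matrix_inv (RLD_Fisher rho \<theta>)))
      + TrAbs (ofRM (W ** ImM (matrix_inv (RLD_Fisher rho \<theta>))))"

definition CZ :: "(real^2 \<Rightarrow> cmat) \<Rightarrow> real^2 \<Rightarrow> rmat \<Rightarrow> real" where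
  "CZ rho \<theta> W = trace (W ** ReM (Zmat rho \<theta>)) + TrAbs (ofRM (W ** ImM (Zmat rho \<theta>)))"

definition locally_unbiased :: "(real^2 \<Rightarrow> cmat) \<Rightarrow> real^2 \<Rightarrow> (2 \<Rightarrow> cmat) set" where
  "locally_unbiased rho \<theta> = {X. (\<forall>i. hermitian (X i)) \<and> (\<forall>i. trace (rho \<theta> ** X i) = 0)
      \<and> (\<forall>i j. trace (pder rho \<theta> i ** X j) = (if i = j then 1 else 0))}"

definition ZmatX :: "(real^2 \<Rightarrow> cmat) \<Rightarrow> real^2 \<Rightarrow> (2 \<Rightarrow> cmat) \<Rightarrow> cmat" where
  "ZmatX rho \<theta> X = (\<chi> i j. trace (rho \<theta> ** X j ** X i))"

definition hfun :: "(real^2 \<Rightarrow> cmat) \<Rightarrow> real^2 \<Rightarrow> (2 \<Rightarrow> cmat) \<Rightarrow> rmat \<Rightarrow> real" where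
  "hfun rho \<theta> X W = trace (W ** ReM (ZmatX rho \<theta> X)) + TrAbs (ofRM (W ** ImM (ZmatX rho \<theta> X)))"

definition CH :: "(real^2 \<Rightarrow> cmat) \<Rightarrow> real^2 \<Rightarrow> rmat \<Rightarrow> real" where
  "CH rho \<theta> W = Inf ((\<lambda>X. hfun rho \<theta> X W) ` locally_unbiased rho \<theta>)"

definition Sterm :: "(real^2 \<Rightarrow> cmat) \<Rightarrow> real^2 \<Rightarrow> rmat \<Rightarrow> real" where
  "Sterm rho \<theta> W = ((CZ rho \<theta> W + CS rho \<theta> W) / 2 - CR rho \<theta> W)\<^sup>2 / (CZ rho \<theta> W - CR rho \<theta> W)"

end

theory Submission
  imports Defs
begin

text \<open>Every hermitian \<open>2\<times>2\<close> matrix is \<open>a I + x\<cdot>\<sigma>\<close> with \<open>a \<in> \<real>\<close>, \<open>x \<in> \<real>\<^sup>3\<close>, and products and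
  traces of such matrices are given by dot and cross products. Writing \<open>\<rho>\<^sub>\<theta> = (I + s\<cdot>\<sigma>)/2\<close>
  and \<open>\<partial>\<^sub>i\<rho>\<^sub>\<theta> = d\<^sub>i\<cdot>\<sigma>/2\<close>, the SLD and RLD operators, both Fisher informations and \<open>Z\<^sub>\<theta>\<close>
  become explicit. The locally unbiased pairs are exactly the SLD duals shifted by
  \<open>t\<^sub>j (d\<^sub>1 \<times> d\<^sub>2)\<cdot>\<sigma>\<close> (recentred), so \<open>h\<^sub>\<theta>[X|W]\<close> becomes the explicit function
  \<open>C\<^sup>S + K t\<^sup>TWt + 2\<surd>(det W) \<bar>E - t\<cdot>u\<bar>\<close> of \<open>t \<in> \<real>\<^sup>2\<close>, while \<open>C\<^sup>Z = C\<^sup>S + 2\<surd>(det W) \<bar>E\<bar>\<close> and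
  \<open>C\<^sup>R = C\<^sup>Z - u\<^sup>T(adj W)u/K\<close>. Cauchy-Schwarz for \<open>W\<close> and \<open>adj W\<close> reduces the minimization to
  that of \<open>a y\<^sup>2 + b \<bar>E - y\<bar>\<close> over \<open>y \<in> \<real>\<close>, whose two regimes give the two cases of the formula.\<close>

section \<open>Explicit 2\<times>2 matrices\<close>

definition mat2 :: "'a \<Rightarrow> 'a \<Rightarrow> 'a \<Rightarrow> 'a \<Rightarrow> 'a^2^2" where
  "mat2 a b c d = (\<chi> i j. if i = 1 then (if j = 1 then a else b) else (if j = 1 then c else d))"

lemma mat2_nth [simp]:
  "mat2 a b c d $ 1 $ 1 = a" "mat2 a b c d $ 1 $ 2 = b"
  "mat2 a b c d $ 2 $ 1 = c" "mat2 a b c d $ 2 $ 2 = d"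
  by (simp_all add: mat2_def)

lemma mat2_eta: "M = mat2 (M$1$1) (M$1$2) (M$2$1) (M$2$2)"
  by (simp add: vec_eq_iff forall_2)

lemma mat2_eq_iff: "mat2 a b c d = mat2 a' b' c' d' \<longleftrightarrow> a = a' \<and> b = b' \<and> c = c' \<and> d = d'"
  by (metis mat2_nth)

lemma mat2_mult:
  "mat2 (a::'a::comm_ring_1) b c d ** mat2 e f g h = mat2 (a*e+b*g) (a*f+b*h) (c*e+d*g) (c*f+d*h)"
  by (simp add: vec_eq_iff forall_2 matrix_matrix_mult_def sum_2)

lemma mat2_mult_vec:
  "mat2 (a::'a::comm_ring_1) b c d *v v = vector [a * v$1 + b * v$2, c * v$1 + d * v$2]"
  by (simp add: vec_eq_iff forall_2 matrix_vector_mult_def sum_2 vector_def)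

lemma trace_mat2: "trace (mat2 (a::'a::comm_ring_1) b c d) = a + d"
  by (simp add: trace_def sum_2)

lemma trace_mat2_mult:
  "trace (mat2 (a::'a::comm_ring_1) b c d ** mat2 a' b' c' d') = a*a' + b*c' + c*b' + d*d'"
  by (simp add: mat2_mult trace_mat2)

lemma det_mat2: "det (mat2 (a::'a::comm_ring_1) b c d) = a*d - b*c"
  by (simp add: det_2)

lemma mat2_add: "mat2 a b c d + mat2 e f g h = mat2 (a+e) (b+f) (c+g) (d+h)"
  by (simp add: vec_eq_iff forall_2)

lemma mat2_scaleR: "r *\<^sub>R mat2 a b c d = mat2 (r*\<^sub>Ra) (r*\<^sub>Rb) (r*\<^sub>Rc) (r*\<^sub>Rd)"
  by (simp add: vec_eq_iff forall_2)

lemma zero_mat2: "(0::'a::zero^2^2) = mat2 0 0 0 0"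
  by (simp add: vec_eq_iff forall_2)

lemma mat_one_mat2: "(mat 1::'a::{zero,one}^2^2) = mat2 1 0 0 1"
  by (simp add: vec_eq_iff forall_2 mat_def)

lemma diag_mat_mat2: "diag_mat d = mat2 (d$1) 0 0 (d$2)"
  by (simp add: diag_mat_def vec_eq_iff forall_2)

lemma cadj_mat2: "cadj (mat2 a b c d) = mat2 (cnj a) (cnj c) (cnj b) (cnj d)"
  by (simp add: vec_eq_iff forall_2 cadj_def)

lemma ReM_mat2: "ReM (mat2 a b c d) = mat2 (Re a) (Re b) (Re c) (Re d)"
  by (simp add: vec_eq_iff forall_2 ReM_def)

lemma ImM_mat2: "ImM (mat2 a b c d) = mat2 (Im a) (Im b) (Im c) (Im d)"
  by (simp add: vec_eq_iff forall_2 ImM_def)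

lemma ofRM_mat2: "ofRM (mat2 a b c d) = mat2 (of_real a) (of_real b) (of_real c) (of_real d)"
  by (simp add: vec_eq_iff forall_2 ofRM_def)

lemma ofRM_zero [simp]: "ofRM 0 = 0"
  by (simp add: ofRM_def vec_eq_iff)

lemma matrix_inv_unique:
  fixes A :: "'a::comm_ring_1^'n^'n"
  assumes "A ** C = mat 1" "C ** A = mat 1"
  shows "matrix_inv A = C"
proof -
  have "\<exists>A'. A ** A' = mat 1 \<and> A' ** A = mat 1" using assms by blast
  then have "A ** matrix_inv A = mat 1 \<and> matrix_inv A ** A = mat 1"
    unfolding matrix_inv_def by (rule someI_ex)
  then show ?thesis by (metis assms matrix_mul_assoc matrix_mul_lid matrix_mul_rid)
qed

lemma invertible_matrix_inv:
  fixes A :: "'a::comm_ring_1^'n^'n"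
  assumes "invertible A"
  shows "A ** matrix_inv A = mat 1" "matrix_inv A ** A = mat 1"
proof -
  have "\<exists>A'. A ** A' = mat 1 \<and> A' ** A = mat 1" using assms invertible_def by blast
  then have "A ** matrix_inv A = mat 1 \<and> matrix_inv A ** A = mat 1"
    unfolding matrix_inv_def by (rule someI_ex)
  then show "A ** matrix_inv A = mat 1" "matrix_inv A ** A = mat 1" by auto
qed

lemma mat2_mult_adjugate:
  fixes a :: "'a::field"
  assumes "a*d - b*c = x" "x \<noteq> 0"
  shows "mat2 a b c d ** mat2 (d/x) (-b/x) (-c/x) (a/x) = mat 1"
    and "mat2 (d/x) (-b/x) (-c/x) (a/x) ** mat2 a b c d = mat 1"
  using assms by (simp_all add: mat2_mult mat_one_mat2 mat2_eq_iff field_simps)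

lemma matrix_inv_mat2:
  fixes a :: "'a::field"
  assumes "a*d - b*c = x" "x \<noteq> 0"
  shows "matrix_inv (mat2 a b c d) = mat2 (d/x) (-b/x) (-c/x) (a/x)"
  using assms by (intro matrix_inv_unique mat2_mult_adjugate)

lemma cadj_mult: "cadj ((A::complex^'n^'n) ** C) = cadj C ** cadj A"
  by (simp add: cadj_def matrix_matrix_mult_def vec_eq_iff mult.commute)

lemma bounded_linear_cadj: "bounded_linear (cadj :: complex^'n^'n \<Rightarrow> complex^'n^'n)"
  unfolding linear_conv_bounded_linear[symmetric]
  by (rule linearI) (simp_all add: cadj_def vec_eq_iff)

lemma bounded_linear_trace: "bounded_linear (trace :: complex^'n^'n \<Rightarrow> complex)"
  unfolding linear_conv_bounded_linear[symmetric]
  by (rule linearI) (simp_all add: trace_def sum.distrib scaleR_sum_right del: scaleR_conv_of_real)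

section \<open>Bloch representation of hermitian 2\<times>2 matrices\<close>

text \<open>\<open>bloch a x = a I + x\<^sub>1 \<sigma>\<^sub>1 + x\<^sub>2 \<sigma>\<^sub>2 + x\<^sub>3 \<sigma>\<^sub>3\<close> with the Pauli matrices \<open>\<sigma>\<^sub>k\<close>.\<close>

definition bloch :: "real \<Rightarrow> real^3 \<Rightarrow> complex^2^2" where
  "bloch a x = mat2 (complex_of_real (a + x$3)) (Complex (x$1) (- x$2))
                    (Complex (x$1) (x$2)) (complex_of_real (a - x$3))"

lemma bloch_add: "bloch a x + bloch b y = bloch (a+b) (x+y)"
  by (simp add: bloch_def mat2_add mat2_eq_iff complex_eq_iff)

lemma scaleR_bloch: "c *\<^sub>R bloch a x = bloch (c*a) (c *\<^sub>R x)"
  by (simp add: bloch_def mat2_scaleR mat2_eq_iff complex_eq_iff algebra_simps)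

lemma bloch_zero: "bloch 0 0 = 0"
  by (simp add: bloch_def zero_mat2 mat2_eq_iff complex_eq_iff)

lemma bloch_one: "bloch 1 0 = mat 1"
  by (simp add: bloch_def mat_one_mat2 mat2_eq_iff complex_eq_iff)

lemma bloch_eq_iff: "bloch a x = bloch b y \<longleftrightarrow> a = b \<and> x = y"
proof
  assume "bloch a x = bloch b y"
  then have "a + x$3 = b + y$3" "a - x$3 = b - y$3" "x$1 = y$1" "x$2 = y$2"
    by (auto simp: bloch_def mat2_eq_iff complex_eq_iff)
  then show "a = b \<and> x = y" by (auto simp: vec_eq_iff forall_3)
qed auto

lemma cadj_bloch: "cadj (bloch a x) = bloch a x"
  by (simp add: bloch_def cadj_mat2 mat2_eq_iff complex_eq_iff)

lemma hermitian_bloch: "hermitian (bloch a x)"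
  by (simp add: hermitian_def cadj_bloch)

lemma trace_bloch: "trace (bloch a x) = 2 * a"
  by (simp add: bloch_def trace_mat2)

lemma trace_bloch_mult: "trace (bloch a x ** bloch b y) = 2 * (a*b + x \<bullet> y)"
  by (simp add: bloch_def mat2_mult trace_mat2 inner_vec_def sum_3 complex_eq_iff algebra_simps)

lemma trace_bloch_mult3:
  "trace (bloch a x ** bloch b y ** bloch c z) =
     Complex (2*((a*b + x \<bullet> y)*c + a*(y \<bullet> z) + b*(x \<bullet> z))) (2*((cross3 x y) \<bullet> z))"
  by (simp add: bloch_def mat2_mult trace_mat2 inner_vec_def sum_3 cross3_def vector_def
      complex_eq_iff algebra_simps)

lemma bloch_anticommutator:
  "bloch a x ** bloch b y + bloch b y ** bloch a x = bloch (2*(a*b + x \<bullet> y)) (2 *\<^sub>R (a *\<^sub>R y + b *\<^sub>R x))"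
  by (simp add: bloch_def mat2_mult mat2_add mat2_eq_iff inner_vec_def sum_3 complex_eq_iff algebra_simps)

lemma inner_cross3_swap: "cross3 x y \<bullet> z = x \<bullet> cross3 y z"
  by (simp add: cross3_def inner_vec_def sum_3 vector_def algebra_simps)

lemma cross3_triple_product: "cross3 a (cross3 b c) = (a \<bullet> c) *\<^sub>R b - (a \<bullet> b) *\<^sub>R c"
  by (simp add: cross3_def inner_vec_def sum_3 vector_def vec_eq_iff forall_3 algebra_simps)

lemma orthogonal_cross3_parallel:
  assumes "y \<bullet> a = 0" "y \<bullet> b = 0"
  shows "((a \<bullet> a) * (b \<bullet> b) - (a \<bullet> b)^2) *\<^sub>R y = (y \<bullet> cross3 a b) *\<^sub>R cross3 a b"
proof -
  have "((a \<bullet> a) * (b \<bullet> b) - (a \<bullet> b)^2) *\<^sub>R y = (y \<bullet> cross3 a b) *\<^sub>R cross3 a b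
     + (y \<bullet> a) *\<^sub>R ((b \<bullet> b) *\<^sub>R a - (a \<bullet> b) *\<^sub>R b) + (y \<bullet> b) *\<^sub>R ((a \<bullet> a) *\<^sub>R b - (a \<bullet> b) *\<^sub>R a)"
    by (simp add: cross3_def inner_vec_def sum_3 vector_def vec_eq_iff forall_3 power2_eq_square
        algebra_simps)
  with assms show ?thesis by simp
qed

lemma bloch_mult_parallel:
  "bloch a (p *\<^sub>R x) ** bloch b (q *\<^sub>R x) = bloch (a*b + p*q*(x \<bullet> x)) ((a*q + b*p) *\<^sub>R x)"
  by (simp add: bloch_def mat2_mult mat2_eq_iff inner_vec_def sum_3 complex_eq_iff algebra_simps)

lemma hermitian_obtain_bloch:
  assumes "hermitian M"
  obtains a x where "M = bloch a x"
proof -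
  have h: "cnj (M$1$1) = M$1$1" "cnj (M$2$2) = M$2$2" "cnj (M$1$2) = M$2$1"
    using assms by (auto simp: hermitian_def cadj_def vec_eq_iff forall_2)
  have "M = bloch (Re (M$1$1 + M$2$2) / 2) (vector [Re (M$2$1), Im (M$2$1), Re (M$1$1 - M$2$2) / 2])"
    by (subst mat2_eta) (use h in \<open>simp add: bloch_def mat2_eq_iff complex_eq_iff vector_def field_simps\<close>)
  then show ?thesis by (rule that)
qed

lemma hermitian_family_obtain_bloch:
  assumes "\<And>i. hermitian (P i)"
  obtains a x where "\<And>i. P i = bloch (a i) (x i)"
proof -
  have "\<forall>i. \<exists>p. P i = bloch (fst p) (snd p)"
    by (metis assms hermitian_obtain_bloch fst_conv snd_conv)
  then obtain f where "\<forall>i. P i = bloch (fst (f i)) (snd (f i))" by metis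
  then show ?thesis by (intro that[of "\<lambda>i. fst (f i)" "\<lambda>i. snd (f i)"]) simp
qed

lemma traceless_hermitian_family_obtain_bloch:
  assumes "\<And>i. hermitian (P i)" "\<And>i. trace (P i) = 0"
  obtains d where "\<And>i. P i = bloch 0 ((1/2) *\<^sub>R d i)"
proof -
  obtain a x where P: "\<And>i. P i = bloch (a i) (x i)"
    using hermitian_family_obtain_bloch[of P] assms(1) by metis
  have "a i = 0" for i using assms(2)[of i] by (simp add: P trace_bloch)
  then show ?thesis using P by (intro that[of "\<lambda>i. 2 *\<^sub>R x i"]) simp
qed

section \<open>Absolute traces, positivity and derivatives\<close>

lemma TrAbs_traceless:
  fixes X :: "complex^2^2"
  assumes "trace X = 0"
    and "\<exists>(T::complex^2^2) (d::complex^2). invertible T \<and> X = T ** diag_mat d ** matrix_inv T"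
  shows "TrAbs X = 2 * sqrt (cmod (det X))"
proof -
  have eigen_sum: "(\<Sum>j\<in>UNIV. cmod (d $ j)) = 2 * sqrt (cmod (det X))"
    if T: "invertible T" and X: "X = T ** diag_mat d ** matrix_inv T" for T :: "complex^2^2" and d
  proof -
    note inv = invertible_matrix_inv[OF T]
    have "trace X = trace (diag_mat d ** (matrix_inv T ** T))"
      using X by (metis matrix_mul_assoc trace_mul_sym)
    then have "d$2 = - d$1"
      using assms(1) inv by (simp add: diag_mat_mat2 trace_mat2 eq_neg_iff_add_eq_0 add.commute)
    moreover have "det X = det (diag_mat d) * det (T ** matrix_inv T)"
      using X by (simp add: det_mul)
    ultimately have "cmod (det X) = (cmod (d$1))^2"
      using inv by (simp add: diag_mat_mat2 det_mat2 norm_mult power2_eq_square)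
    then show ?thesis using \<open>d$2 = - d$1\<close> by (simp add: sum_2)
  qed
  show ?thesis
    unfolding TrAbs_def using assms(2) eigen_sum by (intro the_equality) metis+
qed

lemma traceless_mat2_diagonalizable:
  fixes p q w :: complex
  assumes "q \<noteq> 0" "p^2 + q*w \<noteq> 0"
  shows "\<exists>(T::complex^2^2) (d::complex^2). invertible T \<and> mat2 p q w (-p) = T ** diag_mat d ** matrix_inv T"
proof -
  define l where "l = csqrt (p^2 + q*w)"
  have l2: "l^2 = p^2 + q*w" unfolding l_def by simp
  have "l \<noteq> 0" using assms(2) l2 by auto
  define x where "x = -2*q*l"
  have x: "q * (-l - p) - q * (l - p) = x" "x \<noteq> 0"
    using assms(1) \<open>l \<noteq> 0\<close> by (simp_all add: x_def algebra_simps)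
  define T where "T = mat2 q q (l - p) (-l - p)"
  have T_inv: "matrix_inv T = mat2 ((-l-p)/x) (-q/x) (-(l-p)/x) (q/x)"
    unfolding T_def using matrix_inv_mat2[OF x] .
  have "invertible T"
    unfolding invertible_def T_def using mat2_mult_adjugate[OF x] by blast
  moreover have "mat2 p q w (-p) = T ** diag_mat (vector [l, -l]) ** matrix_inv T"
    unfolding T_inv unfolding T_def diag_mat_mat2 using x \<open>l \<noteq> 0\<close> assms(1)
    by (simp add: mat2_mult mat2_eq_iff vector_def x_def field_simps) (use l2 in algebra)
  ultimately show ?thesis by blast
qed

lemma TrAbs_zero: "TrAbs (0::complex^2^2) = 0"
proof -
  have inv: "invertible (mat 1::complex^2^2)"
    unfolding invertible_def by (metis matrix_mul_lid)
  have "(0::complex^2^2) = mat 1 ** diag_mat 0 ** matrix_inv (mat 1)"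
    by (simp add: diag_mat_def vec_eq_iff matrix_inv_unique[of "mat 1" "mat 1"])
  then have "TrAbs (0::complex^2^2) = 2 * sqrt (cmod (det (0::complex^2^2)))"
    by (intro TrAbs_traceless) (simp add: trace_def, use inv in blast)
  then show ?thesis by (simp add: det_2)
qed

text \<open>For symmetric \<open>W\<close>, the product of \<open>W\<close> with an antisymmetric matrix is traceless with
  eigenvalues \<open>\<plusminus>i a \<surd>det W\<close>.\<close>

lemma TrAbs_mult_antisymmetric:
  fixes W :: "real^2^2"
  assumes "W = mat2 w11 w12 w12 w22" "w11 > 0" "w11 * w22 - w12^2 > 0"
  shows "TrAbs (ofRM (W ** mat2 0 (-a) a 0)) = 2 * sqrt (w11 * w22 - w12^2) * \<bar>a\<bar>"
proof (cases "a = 0")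
  case True
  then show ?thesis using assms by (simp add: mat2_mult ofRM_mat2 TrAbs_zero flip: zero_mat2)
next
  case False
  let ?\<delta> = "(w11 * w22 - w12^2) * a^2"
  have X: "ofRM (W ** mat2 0 (-a) a 0) =
      mat2 (of_real (w12*a)) (of_real (-w11*a)) (of_real (w22*a)) (- of_real (w12*a))"
    using assms by (simp add: mat2_mult ofRM_mat2 mat2_eq_iff)
  have "?\<delta> > 0" using False assms by simp
  have "TrAbs (ofRM (W ** mat2 0 (-a) a 0)) = 2 * sqrt (cmod (det (ofRM (W ** mat2 0 (-a) a 0))))"
  proof (rule TrAbs_traceless)
    show "trace (ofRM (W ** mat2 0 (-a) a 0)) = 0" by (simp add: X trace_mat2)
    have "(of_real (w12*a))^2 + of_real (-w11*a) * of_real (w22*a) = - (of_real ?\<delta> :: complex)"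
      by (simp add: algebra_simps power2_eq_square)
    also have "\<dots> \<noteq> 0"
      using \<open>?\<delta> > 0\<close> by (simp only: neg_equal_0_iff_equal of_real_eq_0_iff less_irrefl)
    finally show "\<exists>(T::complex^2^2) d. invertible T \<and>
        ofRM (W ** mat2 0 (-a) a 0) = T ** diag_mat d ** matrix_inv T"
      unfolding X using False assms by (intro traceless_mat2_diagonalizable) auto
  qed
  also have "det (ofRM (W ** mat2 0 (-a) a 0)) = of_real ?\<delta>"
    unfolding X by (simp add: det_mat2 algebra_simps power2_eq_square)
  also have "cmod (of_real ?\<delta>) = ?\<delta>"
    using \<open>?\<delta> > 0\<close> by (simp only: norm_of_real abs_of_pos)
  finally show ?thesis by (simp add: real_sqrt_mult)
qed

lemma strictly_positive_mat2:
  assumes "strictly_positive (mat2 (complex_of_real p) w (cnj w) (complex_of_real q))"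
  shows "p > 0" "p * q - ((Re w)^2 + (Im w)^2) > 0"
proof -
  note pos = assms[unfolded strictly_positive_def, THEN conjunct2, rule_format]
  have "(vector [1, 0] :: complex^2) \<noteq> 0" by (simp add: vec_eq_iff forall_2 vector_def)
  from pos[OF this] show p: "p > 0"
    by (simp add: mat2_mult_vec sum_2 vector_def)
  have "(vector [w, - complex_of_real p] :: complex^2) \<noteq> 0"
    using p by (simp add: vec_eq_iff forall_2 vector_def)
  from pos[OF this] have "0 < p * (p*q - ((Re w)^2 + (Im w)^2))"
    by (simp add: mat2_mult_vec sum_2 vector_def algebra_simps power2_eq_square)
  then show "p * q - ((Re w)^2 + (Im w)^2) > 0" using p by (simp add: zero_less_mult_iff)
qed

lemma density_matrix_obtain_bloch:
  assumes "strictly_positive \<rho>" "trace \<rho> = 1"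
  obtains s where "\<rho> = bloch (1/2) ((1/2) *\<^sub>R s)" "s \<bullet> s < 1"
proof -
  obtain a x where \<rho>: "\<rho> = bloch a x"
    using assms(1) hermitian_obtain_bloch strictly_positive_def by blast
  then have "a = 1/2" using assms(2) by (simp add: trace_bloch complex_eq_iff)
  define s where "s = 2 *\<^sub>R x"
  have \<rho>_s: "\<rho> = bloch (1/2) ((1/2) *\<^sub>R s)" using \<rho> \<open>a = 1/2\<close> s_def by simp
  have "\<rho> = mat2 (complex_of_real (1/2 + s$3/2)) (Complex (s$1/2) (-(s$2/2)))
               (cnj (Complex (s$1/2) (-(s$2/2)))) (complex_of_real (1/2 - s$3/2))"
    unfolding \<rho>_s bloch_def by (simp add: mat2_eq_iff complex_eq_iff)
  from strictly_positive_mat2(2)[OF assms(1)[unfolded this]] have "s \<bullet> s < 1"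
    by (simp add: inner_vec_def sum_3 power2_eq_square algebra_simps)
  with \<rho>_s show ?thesis by (rule that)
qed

lemma pos_def_mat2_obtain:
  fixes W :: "real^2^2"
  assumes "transpose W = W" "\<forall>v::real^2. v \<noteq> 0 \<longrightarrow> 0 < v \<bullet> (W *v v)"
  obtains w11 w12 w22 where "W = mat2 w11 w12 w12 w22" "w11 > 0" "w11 * w22 - w12^2 > 0"
proof -
  have "W$2$1 = W$1$2" using arg_cong[OF assms(1), of "\<lambda>M. M$1$2"] by (simp add: transpose_def)
  then have W: "W = mat2 (W$1$1) (W$1$2) (W$1$2) (W$2$2)" by (subst mat2_eta) simp
  have "(vector [1, 0] :: real^2) \<noteq> 0" by (simp add: vec_eq_iff forall_2 vector_def)
  with assms(2) have w11: "W$1$1 > 0"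
    by (subst (asm) W) (force simp: mat2_mult_vec inner_vec_def sum_2 vector_def)
  have "(vector [-W$1$2, W$1$1] :: real^2) \<noteq> 0" using w11 by (simp add: vec_eq_iff forall_2 vector_def)
  with assms(2) have "0 < W$1$1 * (W$1$1 * W$2$2 - (W$1$2)^2)"
    by (subst (asm) W)
      (force simp: mat2_mult_vec inner_vec_def sum_2 vector_def power2_eq_square algebra_simps)
  then have "W$1$1 * W$2$2 - (W$1$2)^2 > 0" using w11 by (simp add: zero_less_mult_iff)
  with W w11 show ?thesis by (rule that)
qed

lemma pder_hermitian_traceless:
  fixes rho :: "real^2 \<Rightarrow> complex^2^2"
  assumes "open S" "\<theta> \<in> S" "\<forall>t\<in>S. hermitian (rho t) \<and> trace (rho t) = 1"
    and "rho differentiable (at \<theta>)"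
  shows "hermitian (pder rho \<theta> i)" "trace (pder rho \<theta> i) = 0"
proof -
  let ?F = "frechet_derivative rho (at \<theta>)"
  have d: "(rho has_derivative ?F) (at \<theta>)" using assms(4) frechet_derivative_works by blast
  txt \<open>Both \<open>cadj \<circ> rho - rho\<close> and \<open>trace \<circ> rho - 1\<close> vanish near \<open>\<theta>\<close>, so their derivatives vanish.\<close>
  have "((\<lambda>t. cadj (rho t) - rho t) has_derivative (\<lambda>v. cadj (?F v) - ?F v)) (at \<theta>)"
    by (intro has_derivative_diff bounded_linear.has_derivative[OF bounded_linear_cadj] d)
  then have "((\<lambda>t. 0) has_derivative (\<lambda>v. cadj (?F v) - ?F v)) (at \<theta>)"
    by (rule has_derivative_transform_within_open[OF _ assms(1,2)]) (use assms(3) in \<open>simp add: hermitian_def\<close>)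
  from has_derivative_unique[OF this has_derivative_const]
  have "cadj (?F v) = ?F v" for v by (simp add: fun_eq_iff)
  then show "hermitian (pder rho \<theta> i)" by (simp add: pder_def hermitian_def)
  have "((\<lambda>t. trace (rho t) - 1) has_derivative (\<lambda>v. trace (?F v) - 0)) (at \<theta>)"
    by (intro has_derivative_diff bounded_linear.has_derivative[OF bounded_linear_trace] d
        has_derivative_const)
  then have "((\<lambda>t. 0) has_derivative (\<lambda>v. trace (?F v) - 0)) (at \<theta>)"
    by (rule has_derivative_transform_within_open[OF _ assms(1,2)]) (use assms(3) in simp)
  from has_derivative_unique[OF this has_derivative_const]
  have "trace (?F v) = 0" for v by (simp add: fun_eq_iff)
  then show "trace (pder rho \<theta> i) = 0" by (simp add: pder_def)
qed

lemma cross3_eq_0_linear_dependent: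
  fixes x y :: "real^3"
  assumes "cross3 x y = 0"
  obtains a b where "a \<noteq> 0 \<or> b \<noteq> 0" "a *\<^sub>R x + b *\<^sub>R y = 0"
proof (cases "x = 0")
  case True
  then show ?thesis by (intro that[of 1 0]) simp_all
next
  case False
  let ?v = "(x \<bullet> x) *\<^sub>R y - (x \<bullet> y) *\<^sub>R x"
  have "(x \<bullet> x) * (y \<bullet> y) - (x \<bullet> y)^2 = 0"
    using norm_cross_dot[of x y] assms by (simp add: power2_norm_eq_inner power_mult_distrib)
  moreover have "?v \<bullet> ?v = (x \<bullet> x) * ((x \<bullet> x) * (y \<bullet> y) - (x \<bullet> y)^2)"
    by (simp add: inner_diff_left inner_diff_right inner_commute power2_eq_square algebra_simps)
  ultimately have "?v = 0" by simp
  then have "(- (x \<bullet> y)) *\<^sub>R x + (x \<bullet> x) *\<^sub>R y = 0" by (simp add: algebra_simps)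
  with False show ?thesis by (intro that[of "- (x \<bullet> y)" "x \<bullet> x"]) simp_all
qed

section \<open>A two-dimensional minimization problem\<close>

definition quad2 :: "real \<Rightarrow> real \<Rightarrow> real \<Rightarrow> real \<Rightarrow> real \<Rightarrow> real" where
  "quad2 a b c x y = a*x^2 + 2*b*x*y + c*y^2"

lemma quad2_complete_square: "a * quad2 a b c x y = (a*x + b*y)^2 + (a*c - b^2)*y^2"
  by (simp add: quad2_def power2_eq_square algebra_simps)

lemma quad2_nonneg:
  assumes "a > 0" "a*c - b^2 > 0"
  shows "quad2 a b c x y \<ge> 0"
proof -
  have "a * quad2 a b c x y \<ge> 0"
    unfolding quad2_complete_square using assms(2) by (intro add_nonneg_nonneg) auto
  then show ?thesis using assms(1) by (simp add: zero_le_mult_iff)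
qed

lemma quad2_eq_0_iff:
  assumes "a > 0" "a*c - b^2 > 0"
  shows "quad2 a b c x y = 0 \<longleftrightarrow> x = 0 \<and> y = 0"
proof
  assume "quad2 a b c x y = 0"
  then have "(a*x + b*y)^2 + (a*c - b^2)*y^2 = 0" by (metis quad2_complete_square mult_zero_right)
  moreover have "(a*c - b^2)*y^2 \<ge> 0" using assms by simp
  ultimately have "(a*c - b^2)*y^2 = 0" "(a*x + b*y)^2 = 0"
    by (smt (verit) zero_le_power2)+
  then show "x = 0 \<and> y = 0" using assms by simp
qed (simp add: quad2_def)

text \<open>\<open>quad2 c (-b) a\<close> is the form of the adjugate matrix, dual to \<open>quad2 a b c\<close>.\<close>

lemma quad2_adjugate_Cauchy_Schwarz:
  "(a*c - b^2) * (t1*u1 + t2*u2)^2 \<le> quad2 c (-b) a u1 u2 * quad2 a b c t1 t2"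
proof -
  have "quad2 c (-b) a u1 u2 * quad2 a b c t1 t2 - (a*c - b^2) * (t1*u1 + t2*u2)^2
      = (u1*(b*t1 + c*t2) - u2*(a*t1 + b*t2))^2"
    by (simp add: quad2_def power2_eq_square algebra_simps)
  then show ?thesis by (smt (verit) zero_le_power2)
qed

lemma quad2_adjugate_Cauchy_Schwarz_equality:
  "quad2 a b c (l*(c*u1 - b*u2)) (l*(a*u2 - b*u1)) = l^2 * (a*c - b^2) * quad2 c (-b) a u1 u2"
  "l*(c*u1 - b*u2)*u1 + l*(a*u2 - b*u1)*u2 = l * quad2 c (-b) a u1 u2"
  by (simp_all add: quad2_def power2_eq_square algebra_simps)

definition sq_abs_min :: "real \<Rightarrow> real \<Rightarrow> real \<Rightarrow> real" where
  "sq_abs_min a b E = (if b \<le> 2*a*\<bar>E\<bar> then b*\<bar>E\<bar> - b^2/(4*a) else a*E^2)"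

lemma sq_abs_min_le:
  assumes "a > 0" "b \<ge> 0"
  shows "sq_abs_min a b E \<le> a*y^2 + b*\<bar>E - y\<bar>"
proof (cases "b \<le> 2*a*\<bar>E\<bar>")
  case True
  have "a*y^2 - b*\<bar>y\<bar> + b^2/(4*a) = a*(\<bar>y\<bar> - b/(2*a))^2"
    using assms(1) by (simp add: field_simps power2_eq_square)
  moreover have "b*\<bar>E\<bar> - b*\<bar>y\<bar> \<le> b*\<bar>E - y\<bar>"
    using assms(2) mult_left_mono[of "\<bar>E\<bar> - \<bar>y\<bar>" "\<bar>E - y\<bar>" b] by (simp add: right_diff_distrib)
  moreover have "a*(\<bar>y\<bar> - b/(2*a))^2 \<ge> 0" using assms(1) by simp
  ultimately show ?thesis using True by (simp add: sq_abs_min_def)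
next
  case False
  have "a*E^2 \<le> a*y^2 + b*\<bar>E - y\<bar>"
  proof (cases "\<bar>E\<bar> \<le> \<bar>y\<bar>")
    case True
    then have "E^2 \<le> y^2" by (simp add: abs_le_square_iff)
    then show ?thesis using assms by (simp add: add_increasing2)
  next
    case False
    have "a*E^2 - a*y^2 = a*((\<bar>E\<bar> - \<bar>y\<bar>)*(\<bar>E\<bar> + \<bar>y\<bar>))"
      by (simp add: power2_eq_square algebra_simps abs_mult_self_eq)
    also have "\<dots> \<le> a*(\<bar>E - y\<bar> * (2*\<bar>E\<bar>))"
      using False assms(1) by (intro mult_left_mono mult_mono) auto
    also have "\<dots> \<le> b*\<bar>E - y\<bar>"
      using mult_right_mono[of "2*a*\<bar>E\<bar>" b "\<bar>E - y\<bar>"] \<open>\<not> b \<le> 2*a*\<bar>E\<bar>\<close> by (simp add: mult_ac)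
    finally show ?thesis by simp
  qed
  then show ?thesis using False by (simp add: sq_abs_min_def)
qed

lemma sq_abs_min_attained:
  assumes "a > 0"
  shows "\<exists>y. a*y^2 + b*\<bar>E - y\<bar> = sq_abs_min a b E"
proof (cases "b \<le> 2*a*\<bar>E\<bar>")
  case True
  define y where "y = (if E \<ge> 0 then b/(2*a) else - b/(2*a))"
  have "b/(2*a) \<le> \<bar>E\<bar>" using True assms by (simp add: pos_divide_le_eq mult_ac)
  then have abs_eq: "\<bar>E - y\<bar> = \<bar>E\<bar> - b/(2*a)" by (auto simp: y_def)
  have sq_eq: "y^2 = (b/(2*a))^2" by (simp add: y_def)
  have "a*y^2 + b*\<bar>E - y\<bar> = b*\<bar>E\<bar> - b^2/(4*a)"
    unfolding abs_eq sq_eq using assms by (simp add: field_simps power2_eq_square)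
  then show ?thesis using True by (auto simp: sq_abs_min_def)
next
  case False
  then show ?thesis by (intro exI[of _ E]) (simp add: sq_abs_min_def)
qed

definition holevo_formula :: "real \<Rightarrow> real \<Rightarrow> real \<Rightarrow> real" where
  "holevo_formula cS cR cZ =
     (if cR \<ge> (cZ + cS)/2 then cR else cR + ((cZ + cS)/2 - cR)^2 / (cZ - cR))"

lemma holevo_formula_sq_abs_min:
  assumes "A > 0" "c > 0"
  shows "holevo_formula c0 (c0 - A + 2*c*\<bar>E\<bar>) (c0 + 2*c*\<bar>E\<bar>) = c0 + sq_abs_min (c^2/A) (2*c) E"
proof (cases "A \<le> c*\<bar>E\<bar>")
  case True
  moreover have "2*c \<le> 2*(c^2/A)*\<bar>E\<bar>"
    using True assms by (simp add: field_simps power2_eq_square)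
  ultimately show ?thesis
    using assms by (simp add: holevo_formula_def sq_abs_min_def field_simps power2_eq_square)
next
  case False
  moreover have "\<not> 2*c \<le> 2*(c^2/A)*\<bar>E\<bar>"
    using False assms by (simp add: field_simps power2_eq_square)
  ultimately show ?thesis
    using assms by (simp add: holevo_formula_def sq_abs_min_def field_simps power2_eq_square)
qed

text \<open>Minimizing \<open>K t\<^sup>T W t + 2 \<surd>(det W) \<bar>E - t\<cdot>u\<bar>\<close> over \<open>t \<in> \<real>\<^sup>2\<close>: for fixed \<open>y = t\<cdot>u\<close> the
  quadratic term is at least \<open>det W y\<^sup>2 / (u\<^sup>T adj W u)\<close>, which reduces the problem to \<open>sq_abs_min\<close>.\<close>

lemma quad2_abs_objective_min:
  fixes w11 w12 w22 K C E p q :: real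
  assumes "w11 > 0" "w11*w22 - w12^2 > 0" "K > 0"
  defines "c \<equiv> sqrt (w11*w22 - w12^2)" and "A \<equiv> quad2 w22 (-w12) w11 p q / K"
  defines "f \<equiv> \<lambda>t1 t2. C + K * quad2 w11 w12 w22 t1 t2 + 2*c*\<bar>E - (t1*p + t2*q)\<bar>"
    and "m \<equiv> holevo_formula C (C - A + 2*c*\<bar>E\<bar>) (C + 2*c*\<bar>E\<bar>)"
  shows "m \<le> f t1 t2" and "\<exists>t1 t2. f t1 t2 = m"
proof -
  let ?Q = "quad2 w22 (-w12) w11 p q"
  have c: "c > 0" "c^2 = w11*w22 - w12^2" using assms(2) by (simp_all add: c_def)
  have "w11 * w22 > 0" using assms(2) zero_le_power2[of w12] by linarith
  then have adj_pos_def: "w22 > 0" "w22*w11 - (-w12)^2 > 0"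
    using assms(1,2) zero_less_mult_pos by (auto simp: mult.commute)
  have "?Q \<ge> 0" using quad2_nonneg[OF adj_pos_def] .
  then consider "?Q = 0" | "?Q > 0" by linarith
  then have "m \<le> f t1 t2 \<and> (\<exists>t1 t2. f t1 t2 = m)"
  proof cases
    case 1
    then have "p = 0" "q = 0" using quad2_eq_0_iff[OF adj_pos_def] by auto
    then have "m = C + 2*c*\<bar>E\<bar>" "f = (\<lambda>t1 t2. C + K * quad2 w11 w12 w22 t1 t2 + 2*c*\<bar>E\<bar>)"
      using c by (simp_all add: m_def f_def A_def holevo_formula_def quad2_def)
    moreover have "f 0 0 = m" using \<open>m = C + 2*c*\<bar>E\<bar>\<close> by (simp add: f_def quad2_def)
    ultimately show ?thesis
      using quad2_nonneg[OF assms(1,2)] assms(3) by auto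
  next
    case 2
    then have "A > 0" using assms(3) by (simp add: A_def)
    have m: "m = C + sq_abs_min (c^2/A) (2*c) E"
      unfolding m_def using holevo_formula_sq_abs_min[OF \<open>A > 0\<close> c(1)] .
    have P: "?Q = A * K" using assms(3) by (simp add: A_def)
    have "c^2/A > 0" using \<open>A > 0\<close> c(1) by simp
    have "c^2/A * (t1*p + t2*q)^2 \<le> K * quad2 w11 w12 w22 t1 t2"
      using quad2_adjugate_Cauchy_Schwarz[of w11 w22 w12 t1 p t2 q] \<open>A > 0\<close> assms(3)
      by (simp add: c(2) P divide_le_eq mult_ac)
    moreover have "sq_abs_min (c^2/A) (2*c) E \<le> c^2/A * (t1*p + t2*q)^2 + 2*c*\<bar>E - (t1*p + t2*q)\<bar>"
      using \<open>c^2/A > 0\<close> c(1) by (intro sq_abs_min_le) auto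
    ultimately have lower: "m \<le> f t1 t2" by (simp add: m f_def)
    obtain y where y: "c^2/A * y^2 + 2*c*\<bar>E - y\<bar> = sq_abs_min (c^2/A) (2*c) E"
      using sq_abs_min_attained[OF \<open>c^2/A > 0\<close>] by blast
    define l where "l = y / ?Q"
    have "l * ?Q = y" using 2 by (simp add: l_def)
    moreover have "K * (l^2 * c^2 * ?Q) = c^2/A * y^2"
      using 2 \<open>A > 0\<close> assms(3) by (simp add: l_def P field_simps power2_eq_square)
    ultimately have "f (l*(w22*p - w12*q)) (l*(w11*q - w12*p)) = m"
      using y by (simp add: f_def m quad2_adjugate_Cauchy_Schwarz_equality flip: c(2))
    with lower show ?thesis by blast
  qed
  then show "m \<le> f t1 t2" "\<exists>t1 t2. f t1 t2 = m" by blast+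
qed

section \<open>Qubit models in Bloch coordinates\<close>

locale qubit_model_at =
  fixes rho :: "real^2 \<Rightarrow> complex^2^2" and \<theta> :: "real^2" and s :: "real^3" and d :: "2 \<Rightarrow> real^3"
  assumes state_bloch: "rho \<theta> = bloch (1/2) ((1/2) *\<^sub>R s)"
    and pder_bloch: "pder rho \<theta> i = bloch 0 ((1/2) *\<^sub>R d i)"
    and bloch_inside: "s \<bullet> s < 1"
    and pder_independent: "cross3 (d 1) (d 2) \<noteq> 0"
begin

definition g :: "2 \<Rightarrow> 2 \<Rightarrow> real" where
  "g i j = d i \<bullet> d j"
definition u :: "2 \<Rightarrow> real" where
  "u i = s \<bullet> d i"
definition nv :: "real^3" where
  "nv = cross3 (d 1) (d 2)"
definition e :: "real" where
  "e = s \<bullet> nv"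
definition r :: "real" where
  "r = 1 - s \<bullet> s"
definition detg :: "real" where
  "detg = g 1 1 * g 2 2 - (g 1 2)^2"
definition K :: "real" where
  "K = detg - e^2"

lemma r_pos: "r > 0"
  using bloch_inside by (simp add: r_def)

lemma g_sym: "g i j = g j i"
  by (simp add: g_def inner_commute)

lemma detg_eq: "detg = nv \<bullet> nv"
  using norm_cross_dot[of "d 1" "d 2"]
  by (simp add: detg_def g_def nv_def power2_norm_eq_inner power_mult_distrib)

lemma K_pos: "K > 0"
proof -
  have "e^2 \<le> (s \<bullet> s) * detg"
    using Cauchy_Schwarz_ineq[of s nv] by (simp add: e_def detg_eq)
  moreover have "(s \<bullet> s) * detg < detg"
    using bloch_inside pder_independent by (simp add: detg_eq nv_def)
  ultimately show ?thesis by (simp add: K_def)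
qed

lemma gram_identity: "g 2 2 * (u 1)^2 - 2 * g 1 2 * u 1 * u 2 + g 1 1 * (u 2)^2 + e^2 = detg * (s \<bullet> s)"
  unfolding g_def u_def e_def nv_def detg_def
  by (simp add: cross3_def inner_vec_def sum_3 vector_def power2_eq_square algebra_simps)

lemma inner_d_nv: "d 1 \<bullet> nv = 0" "d 2 \<bullet> nv = 0"
  by (simp_all add: nv_def dot_cross_self)

lemma trace_state_mult: "trace (rho \<theta> ** bloch a x) = complex_of_real (a + s \<bullet> x)"
  by (simp add: state_bloch trace_bloch_mult)

lemma trace_pder_mult: "trace (pder rho \<theta> k ** bloch a x) = complex_of_real (d k \<bullet> x)"
  by (simp add: pder_bloch trace_bloch_mult)

text \<open>\<open>centred x\<close> is the observable with Bloch vector \<open>x\<close> and mean zero in \<open>\<rho>\<^sub>\<theta>\<close>;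
  \<open>qform\<close> is the real part of the covariance of two such observables.\<close>

definition centred :: "real^3 \<Rightarrow> complex^2^2" where
  "centred x = bloch (- (s \<bullet> x)) x"
definition qform :: "real^3 \<Rightarrow> real^3 \<Rightarrow> real" where
  "qform x y = x \<bullet> y - (s \<bullet> x) * (s \<bullet> y)"

lemma hermitian_centred: "hermitian (centred x)"
  by (simp add: centred_def hermitian_bloch)

lemma sum_scaleR_centred:
  fixes c :: "2 \<Rightarrow> real"
  shows "(\<Sum>j\<in>UNIV. c j *\<^sub>R centred (x j)) = centred (\<Sum>j\<in>UNIV. c j *\<^sub>R x j)"
  by (simp add: centred_def sum_2 scaleR_bloch bloch_add inner_add_right algebra_simps)

lemma trace_state_centred_mult:
  "trace (rho \<theta> ** centred x ** centred y) = Complex (qform x y) (s \<bullet> cross3 x y)"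
proof -
  have "s \<bullet> cross3 ((1/2) *\<^sub>R s) x = 0" by (simp add: cross_mult_left dot_cross_self)
  then show ?thesis
    by (simp add: state_bloch centred_def qform_def trace_bloch_mult3 cross_mult_left
        inner_cross3_swap algebra_simps)
qed

lemma Re_trace_state_centred_anticommutator:
  "Re (trace (rho \<theta> ** ((1/2::real) *\<^sub>R (centred x ** centred y + centred y ** centred x)))) = qform x y"
  by (simp add: state_bloch centred_def qform_def bloch_anticommutator scaleR_bloch trace_bloch_mult
      algebra_simps inner_commute)

definition sld_vec :: "2 \<Rightarrow> real^3" where
  "sld_vec i = d i + (u i / r) *\<^sub>R s"

lemma inner_s_sld_vec: "s \<bullet> sld_vec i = u i / r"
proof -
  have "s \<bullet> sld_vec i = u i + u i / r * (s \<bullet> s)" by (simp add: sld_vec_def u_def inner_add_right)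
  also have "\<dots> = u i / r" using r_pos by (simp add: r_def field_simps)
  finally show ?thesis .
qed

lemma qform_sld_vec: "qform (sld_vec k) v = d k \<bullet> v"
proof -
  have "sld_vec k \<bullet> v = d k \<bullet> v + (u k / r) * (s \<bullet> v)" by (simp add: sld_vec_def inner_add_left)
  then show ?thesis by (simp add: qform_def inner_s_sld_vec)
qed

lemma inner_d_sld_vec: "d k \<bullet> sld_vec j = g k j + u k * u j / r"
  by (simp add: sld_vec_def inner_add_right g_def u_def inner_commute)

lemma symmetrized_product_eq_pder_iff:
  "(1/2::real) *\<^sub>R (rho \<theta> ** bloch a x + bloch a x ** rho \<theta>) = pder rho \<theta> i
     \<longleftrightarrow> a = - (s \<bullet> x) \<and> x = sld_vec i"
proof -
  have "(1/2::real) *\<^sub>R (rho \<theta> ** bloch a x + bloch a x ** rho \<theta>)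
      = bloch ((a + s \<bullet> x) / 2) ((1/2) *\<^sub>R (x + a *\<^sub>R s))"
    by (simp add: state_bloch bloch_anticommutator scaleR_bloch bloch_eq_iff inner_commute algebra_simps)
  then have "(1/2::real) *\<^sub>R (rho \<theta> ** bloch a x + bloch a x ** rho \<theta>) = pder rho \<theta> i
      \<longleftrightarrow> a + s \<bullet> x = 0 \<and> x + a *\<^sub>R s = d i"
    by (simp add: pder_bloch bloch_eq_iff)
  also have "\<dots> \<longleftrightarrow> a = - (s \<bullet> x) \<and> x - (s \<bullet> x) *\<^sub>R s = d i"
  proof -
    have "a + s \<bullet> x = 0 \<longleftrightarrow> a = - (s \<bullet> x)" by linarith
    then show ?thesis by auto
  qed
  also have "x - (s \<bullet> x) *\<^sub>R s = d i \<longleftrightarrow> x = sld_vec i"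
  proof
    assume x: "x - (s \<bullet> x) *\<^sub>R s = d i"
    then have "(s \<bullet> x) * r = u i"
      by (metis inner_diff_right inner_scaleR_right u_def r_def right_diff_distrib mult.right_neutral)
    then have "s \<bullet> x = u i / r" using r_pos by (simp add: eq_divide_eq mult.commute)
    then show "x = sld_vec i"
      using x by (simp add: sld_vec_def algebra_simps)
  next
    assume "x = sld_vec i"
    then show "x - (s \<bullet> x) *\<^sub>R s = d i" by (simp only: inner_s_sld_vec) (simp add: sld_vec_def)
  qed
  finally show ?thesis .
qed

lemma SLD_eq: "SLD rho \<theta> i = centred (sld_vec i)"
  unfolding SLD_def
proof (rule the_equality)
  have "(1/2::real) *\<^sub>R (rho \<theta> ** centred (sld_vec i) + centred (sld_vec i) ** rho \<theta>) = pder rho \<theta> i"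
    by (simp add: centred_def symmetrized_product_eq_pder_iff)
  then show "hermitian (centred (sld_vec i)) \<and>
      pder rho \<theta> i = (1/2::real) *\<^sub>R (rho \<theta> ** centred (sld_vec i) + centred (sld_vec i) ** rho \<theta>)"
    by (simp add: hermitian_centred)
next
  fix L assume L: "hermitian L \<and> pder rho \<theta> i = (1/2::real) *\<^sub>R (rho \<theta> ** L + L ** rho \<theta>)"
  then obtain a x where "L = bloch a x" using hermitian_obtain_bloch by blast
  with L[THEN conjunct2, symmetric] show "L = centred (sld_vec i)"
    by (simp add: centred_def symmetrized_product_eq_pder_iff)
qed

definition G :: "2 \<Rightarrow> 2 \<Rightarrow> real" where
  "G i j = g i j + u i * u j / r"
definition Gmat :: "real^2^2" where
  "Gmat = mat2 (G 1 1) (G 1 2) (G 2 1) (G 2 2)"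

lemma Gmat_nth: "Gmat $ i $ j = G i j"
  using exhaust_2[of i] exhaust_2[of j] by (auto simp: Gmat_def)

lemma SLD_Fisher_eq: "SLD_Fisher rho \<theta> = Gmat"
  by (simp add: vec_eq_iff SLD_Fisher_def SLD_eq Re_trace_state_centred_anticommutator qform_sld_vec
      inner_d_sld_vec G_def Gmat_nth)

lemma det_Gmat: "G 1 1 * G 2 2 - G 1 2 * G 2 1 = K / r"
  using r_pos
  by (simp add: G_def g_sym[of 2 1] field_simps)
    (use gram_identity K_def detg_def r_def in algebra)

definition Ginv :: "real^2^2" where
  "Ginv = mat2 ((r * g 2 2 + (u 2)^2)/K) (-(r * g 1 2 + u 1 * u 2)/K)
                (-(r * g 1 2 + u 1 * u 2)/K) ((r * g 1 1 + (u 1)^2)/K)"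

lemma Ginv_adjugate: "Ginv = mat2 (G 2 2/(K/r)) (- G 1 2/(K/r)) (- G 2 1/(K/r)) (G 1 1/(K/r))"
  using r_pos K_pos unfolding Ginv_def
  by (simp add: mat2_eq_iff G_def g_sym[of 2 1] field_simps power2_eq_square)

lemma matrix_inv_Gmat: "matrix_inv Gmat = Ginv"
  unfolding Gmat_def Ginv_adjugate using K_pos r_pos det_Gmat by (intro matrix_inv_mat2) auto

lemma Gmat_mult_Ginv: "Gmat ** Ginv = mat 1"
  unfolding Gmat_def Ginv_adjugate using K_pos r_pos det_Gmat by (intro mat2_mult_adjugate) auto

lemma Ginv_sym: "Ginv $ i $ j = Ginv $ j $ i"
  using exhaust_2[of i] exhaust_2[of j] by (auto simp: Ginv_def)

lemma det_Ginv: "Ginv$1$1 * Ginv$2$2 - Ginv$1$2 * Ginv$2$1 = r / K"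
  using r_pos K_pos
  by (simp add: Ginv_def field_simps) (use gram_identity K_def detg_def r_def in algebra)

definition dual_vec :: "2 \<Rightarrow> real^3" where
  "dual_vec i = (\<Sum>j\<in>UNIV. Ginv$j$i *\<^sub>R sld_vec j)"

lemma SLD_dual_eq: "SLD_dual rho \<theta> i = centred (dual_vec i)"
  by (simp add: SLD_dual_def SLD_Fisher_eq matrix_inv_Gmat SLD_eq sum_scaleR_centred dual_vec_def)

lemma inner_d_dual_vec: "d k \<bullet> dual_vec i = (if k = i then 1 else 0)"
proof -
  have "d k \<bullet> dual_vec i = (\<Sum>j\<in>UNIV. Gmat$k$j * Ginv$j$i)"
    by (simp add: dual_vec_def inner_sum_right inner_d_sld_vec Gmat_nth G_def mult.commute)
  also have "\<dots> = (Gmat ** Ginv) $ k $ i" by (simp add: matrix_matrix_mult_def)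
  finally show ?thesis by (simp add: Gmat_mult_Ginv mat_def)
qed

lemma qform_dual_vec: "qform (dual_vec j) (dual_vec i) = Ginv $ i $ j"
proof -
  have "qform (dual_vec j) (dual_vec i)
      = Ginv$1$j * qform (sld_vec 1) (dual_vec i) + Ginv$2$j * qform (sld_vec 2) (dual_vec i)"
    by (simp add: qform_def dual_vec_def[of j] sum_2 inner_add_left algebra_simps)
  also have "\<dots> = Ginv $ i $ j" using exhaust_2[of i] by (auto simp: qform_sld_vec inner_d_dual_vec)
  finally show ?thesis .
qed

lemma s_cross_sld_vec: "s \<bullet> cross3 (sld_vec 1) (sld_vec 2) = e"
  by (simp add: sld_vec_def cross_add_left cross_add_right cross_mult_left cross_mult_right
      inner_add_right dot_cross_self e_def nv_def)

lemma s_cross_dual_vec: "s \<bullet> cross3 (dual_vec 1) (dual_vec 2) = r*e/K"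
proof -
  have "cross3 (dual_vec 1) (dual_vec 2)
      = (Ginv$1$1 * Ginv$2$2 - Ginv$2$1 * Ginv$1$2) *\<^sub>R cross3 (sld_vec 1) (sld_vec 2)"
    by (simp add: dual_vec_def sum_2 cross_add_left cross_add_right cross_mult_left cross_mult_right
        algebra_simps cross_skew[of "sld_vec 2" "sld_vec 1"])
  then show ?thesis using det_Ginv Ginv_sym[of 1 2] by (simp add: s_cross_sld_vec)
qed

lemma Zmat_eq:
  "Zmat rho \<theta> = mat2 (Complex (Ginv$1$1) 0) (Complex (Ginv$1$2) (-(r*e/K)))
                       (Complex (Ginv$2$1) (r*e/K)) (Complex (Ginv$2$2) 0)"
proof -
  have "Zmat rho \<theta> $ i $ j = Complex (Ginv $ i $ j) (s \<bullet> cross3 (dual_vec j) (dual_vec i))" for i j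
    by (simp add: Zmat_def SLD_dual_eq trace_state_centred_mult qform_dual_vec)
  then show ?thesis
    by (simp add: vec_eq_iff forall_2 s_cross_dual_vec cross_skew[of "dual_vec 2" "dual_vec 1"])
qed

definition state_inv :: "complex^2^2" where
  "state_inv = bloch (2/r) ((-2/r) *\<^sub>R s)"

lemma state_mult_state_inv: "rho \<theta> ** state_inv = mat 1" "state_inv ** rho \<theta> = mat 1"
proof -
  have "rho \<theta> ** state_inv = bloch (1/2 * (2/r) + 1/2 * (-2/r) * (s \<bullet> s)) ((1/2 * (-2/r) + 2/r * (1/2)) *\<^sub>R s)"
    unfolding state_bloch state_inv_def by (rule bloch_mult_parallel)
  also have "\<dots> = bloch 1 0" using r_pos by (simp add: r_def field_simps)
  finally show "rho \<theta> ** state_inv = mat 1" by (simp add: bloch_one)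
  have "state_inv ** rho \<theta> = bloch (2/r * (1/2) + (-2/r) * (1/2) * (s \<bullet> s)) ((2/r * (1/2) + 1/2 * (-2/r)) *\<^sub>R s)"
    unfolding state_bloch state_inv_def by (rule bloch_mult_parallel)
  also have "\<dots> = bloch 1 0" using r_pos by (simp add: r_def field_simps)
  finally show "state_inv ** rho \<theta> = mat 1" by (simp add: bloch_one)
qed

lemma RLD_eq: "RLD rho \<theta> i = state_inv ** pder rho \<theta> i"
  unfolding RLD_def
proof (rule the_equality)
  show "pder rho \<theta> i = rho \<theta> ** (state_inv ** pder rho \<theta> i)"
    by (simp add: matrix_mul_assoc state_mult_state_inv)
next
  fix L assume "pder rho \<theta> i = rho \<theta> ** L"
  then have "state_inv ** pder rho \<theta> i = (state_inv ** rho \<theta>) ** L" by (simp add: matrix_mul_assoc)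
  then show "L = state_inv ** pder rho \<theta> i" by (simp add: state_mult_state_inv)
qed

lemma RLD_Fisher_eq:
  "RLD_Fisher rho \<theta> = mat2 (complex_of_real (g 1 1 / r)) (Complex (g 1 2 / r) (e / r))
                            (Complex (g 1 2 / r) (-e / r)) (complex_of_real (g 2 2 / r))"
proof -
  have "RLD_Fisher rho \<theta> $ i $ j = trace (pder rho \<theta> j ** pder rho \<theta> i ** state_inv)" for i j
  proof -
    have "cadj (pder rho \<theta> k) = pder rho \<theta> k" "cadj state_inv = state_inv" for k
      by (simp_all add: pder_bloch state_inv_def cadj_bloch)
    then show ?thesis
      by (simp add: RLD_Fisher_def RLD_eq cadj_mult matrix_mul_assoc state_mult_state_inv)
  qed
  moreover have "trace (pder rho \<theta> j ** pder rho \<theta> i ** state_inv)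
      = Complex (g j i / r) (- ((cross3 (d j) (d i)) \<bullet> s) / r)" for i j
    by (simp add: pder_bloch state_inv_def trace_bloch_mult3 cross_mult_left cross_mult_right g_def)
  ultimately show ?thesis
    by (simp add: vec_eq_iff forall_2 complex_eq_iff e_def nv_def g_sym[of 2 1]
        cross_skew[of "d 2" "d 1"] inner_commute)
qed

lemma matrix_inv_RLD_Fisher:
  "matrix_inv (RLD_Fisher rho \<theta>) =
     mat2 (complex_of_real (r * g 2 2 / K)) (Complex (-r * g 1 2 / K) (-r * e / K))
          (Complex (-r * g 1 2 / K) (r * e / K)) (complex_of_real (r * g 1 1 / K))"
proof -
  have det: "complex_of_real (g 1 1 / r) * complex_of_real (g 2 2 / r)
      - Complex (g 1 2 / r) (e / r) * Complex (g 1 2 / r) (-e / r) = complex_of_real (K / r^2)"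
    using r_pos by (simp add: complex_eq_iff K_def detg_def field_simps power2_eq_square)
  have nz: "complex_of_real (K / r^2) \<noteq> 0" using K_pos r_pos by simp
  show ?thesis
    unfolding RLD_Fisher_eq matrix_inv_mat2[OF det nz] using r_pos K_pos
    by (simp add: mat2_eq_iff complex_eq_iff field_simps power2_eq_square)
qed

definition unbiased_vec :: "(2 \<Rightarrow> real) \<Rightarrow> 2 \<Rightarrow> real^3" where
  "unbiased_vec t j = dual_vec j + t j *\<^sub>R nv"

lemma inner_d_unbiased_vec: "d k \<bullet> unbiased_vec t j = (if k = j then 1 else 0)"
  using exhaust_2[of k] by (auto simp: unbiased_vec_def inner_add_right inner_d_dual_vec inner_d_nv)

text \<open>The locally unbiased pairs are the SLD duals shifted by arbitrary multiples of the
  observable with Bloch vector \<open>d\<^sub>1 \<times> d\<^sub>2\<close>, which is uncorrelated with \<open>\<partial>\<^sub>1\<rho>\<^sub>\<theta>, \<partial>\<^sub>2\<rho>\<^sub>\<theta>\<close>.\<close>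

lemma locally_unbiased_eq: "locally_unbiased rho \<theta> = range (\<lambda>t j. centred (unbiased_vec t j))"
proof (intro equalityI subsetI)
  fix X assume "X \<in> locally_unbiased rho \<theta>"
  then have X: "\<And>i. hermitian (X i)" "\<And>i. trace (rho \<theta> ** X i) = 0"
    "\<And>i j. trace (pder rho \<theta> i ** X j) = (if i = j then 1 else 0)"
    unfolding locally_unbiased_def by auto
  obtain a x where ax: "\<And>j. X j = bloch (a j) (x j)"
    using hermitian_family_obtain_bloch[of X] X(1) by metis
  have "complex_of_real (a j + s \<bullet> x j) = 0" for j
    using X(2)[of j] by (simp only: ax trace_state_mult)
  then have "a j + s \<bullet> x j = 0" for j by (simp only: of_real_eq_0_iff)
  then have X_centred: "X j = centred (x j)" for j
    by (simp add: ax centred_def bloch_eq_iff eq_neg_iff_add_eq_0)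
  have "complex_of_real (d k \<bullet> x j) = complex_of_real (if k = j then 1 else 0)" for k j
    using X(3)[of k j] by (simp only: ax trace_pder_mult) simp
  then have dx: "d k \<bullet> x j = (if k = j then 1 else 0)" for k j
    by (simp only: of_real_eq_iff)
  define t where "t j = ((x j - dual_vec j) \<bullet> nv) / detg" for j
  have "x j = unbiased_vec t j" for j
  proof -
    let ?y = "x j - dual_vec j"
    have "?y \<bullet> d 1 = 0" "?y \<bullet> d 2 = 0"
      by (simp_all add: inner_diff_left inner_commute[of "x j"] inner_commute[of "dual_vec j"] dx
          inner_d_dual_vec)
    from orthogonal_cross3_parallel[OF this]
    have "detg *\<^sub>R ?y = (?y \<bullet> nv) *\<^sub>R nv"
      by (simp add: detg_def g_def nv_def)
    moreover have "detg \<noteq> 0" using detg_eq pder_independent by (simp add: nv_def)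
    ultimately have "?y = t j *\<^sub>R nv"
      by (simp add: t_def eq_vector_fraction_iff)
    then show ?thesis by (simp add: unbiased_vec_def algebra_simps)
  qed
  then have "X = (\<lambda>j. centred (unbiased_vec t j))" using X_centred by auto
  then show "X \<in> range (\<lambda>t j. centred (unbiased_vec t j))" by blast
next
  fix X assume "X \<in> range (\<lambda>t j. centred (unbiased_vec t j))"
  then obtain t where "X = (\<lambda>j. centred (unbiased_vec t j))" by blast
  then show "X \<in> locally_unbiased rho \<theta>"
    by (simp add: locally_unbiased_def hermitian_bloch centred_def trace_state_mult
        trace_pder_mult inner_d_unbiased_vec)
qed

lemma qform_nv: "qform (dual_vec j) nv = 0" "qform nv nv = K"
proof -
  have "qform (dual_vec j) nv = Ginv$1$j * qform (sld_vec 1) nv + Ginv$2$j * qform (sld_vec 2) nv"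
    by (simp add: qform_def dual_vec_def sum_2 inner_add_left algebra_simps)
  then show "qform (dual_vec j) nv = 0" by (simp add: qform_sld_vec inner_d_nv)
  show "qform nv nv = K" by (simp add: qform_def K_def detg_eq e_def power2_eq_square)
qed

lemma trace_state_unbiased_mult:
  "trace (rho \<theta> ** centred (unbiased_vec t j) ** centred (unbiased_vec t i))
     = Complex (Ginv $ i $ j + K * t j * t i) (s \<bullet> cross3 (unbiased_vec t j) (unbiased_vec t i))"
proof -
  have "qform (unbiased_vec t j) (unbiased_vec t i)
      = qform (dual_vec j) (dual_vec i) + t i * qform (dual_vec j) nv + t j * qform (dual_vec i) nv
      + t j * t i * qform nv nv"
    by (simp add: qform_def unbiased_vec_def inner_add_left inner_add_right inner_commute algebra_simps)
  then show ?thesis by (simp add: trace_state_centred_mult qform_dual_vec qform_nv)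
qed

lemma s_cross_dual_vec_nv: "s \<bullet> cross3 (dual_vec 1) nv = - u 2" "s \<bullet> cross3 (dual_vec 2) nv = u 1"
proof -
  have "s \<bullet> cross3 (sld_vec k) nv = s \<bullet> cross3 (d k) nv" for k
    by (simp add: sld_vec_def cross_add_left cross_mult_left inner_add_right dot_cross_self)
  then have m: "s \<bullet> cross3 (dual_vec j) nv
      = Ginv$1$j * (s \<bullet> cross3 (d 1) nv) + Ginv$2$j * (s \<bullet> cross3 (d 2) nv)" for j
    by (simp add: dual_vec_def sum_2 cross_add_left cross_mult_left inner_add_right)
  have "s \<bullet> cross3 (d 1) nv = g 1 2 * u 1 - g 1 1 * u 2" "s \<bullet> cross3 (d 2) nv = g 2 2 * u 1 - g 1 2 * u 2"
    by (simp_all add: nv_def cross3_triple_product inner_diff_right g_def u_def inner_commute)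
  then show "s \<bullet> cross3 (dual_vec 1) nv = - u 2" "s \<bullet> cross3 (dual_vec 2) nv = u 1"
    unfolding m using K_pos
    by (simp_all add: Ginv_def field_simps) (use gram_identity K_def detg_def r_def in algebra)+
qed

lemma s_cross_unbiased_vec:
  "s \<bullet> cross3 (unbiased_vec t 1) (unbiased_vec t 2) = r*e/K - (t 1 * u 1 + t 2 * u 2)"
proof -
  have "s \<bullet> cross3 (unbiased_vec t 1) (unbiased_vec t 2)
      = s \<bullet> cross3 (dual_vec 1) (dual_vec 2) + t 2 * (s \<bullet> cross3 (dual_vec 1) nv)
        - t 1 * (s \<bullet> cross3 (dual_vec 2) nv)"
    by (simp add: unbiased_vec_def cross_add_left cross_add_right cross_mult_left cross_mult_right
        inner_add_right
        cross_skew[of nv "dual_vec 2"] algebra_simps)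
  then show ?thesis by (simp add: s_cross_dual_vec s_cross_dual_vec_nv algebra_simps)
qed

context
  fixes W :: "real^2^2" and w11 w12 w22 :: real
  assumes W: "W = mat2 w11 w12 w12 w22" and W_pos: "w11 > 0" "w11 * w22 - w12^2 > 0"
begin

lemma TrAbs_W_mult_antisymmetric: "TrAbs (ofRM (W ** mat2 0 (-a) a 0)) = 2 * sqrt (w11 * w22 - w12^2) * \<bar>a\<bar>"
  using TrAbs_mult_antisymmetric[OF W W_pos] .

lemma CS_eq: "CS rho \<theta> W = trace (W ** Ginv)"
  by (simp add: CS_def SLD_Fisher_eq matrix_inv_Gmat)

lemma CZ_eq: "CZ rho \<theta> W = trace (W ** Ginv) + 2 * sqrt (w11 * w22 - w12^2) * \<bar>r*e/K\<bar>"
proof -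
  have "ReM (Zmat rho \<theta>) = Ginv" by (simp add: Zmat_eq ReM_mat2 flip: mat2_eta)
  moreover have "ImM (Zmat rho \<theta>) = mat2 0 (-(r*e/K)) (r*e/K) 0" by (simp add: Zmat_eq ImM_mat2)
  ultimately show ?thesis by (simp add: CZ_def TrAbs_W_mult_antisymmetric)
qed

lemma CR_eq:
  "CR rho \<theta> W = trace (W ** Ginv) - quad2 w22 (-w12) w11 (u 1) (u 2) / K
     + 2 * sqrt (w11 * w22 - w12^2) * \<bar>r*e/K\<bar>"
proof -
  have "trace (W ** mat2 (r * g 2 2 / K) (-r * g 1 2 / K) (-r * g 1 2 / K) (r * g 1 1 / K))
      = trace (W ** Ginv) - quad2 w22 (-w12) w11 (u 1) (u 2) / K"
    unfolding W using K_pos by (simp add: Ginv_def quad2_def trace_mat2_mult field_simps power2_eq_square)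
  then show ?thesis
    by (simp add: CR_def matrix_inv_RLD_Fisher ReM_mat2 ImM_mat2 TrAbs_W_mult_antisymmetric)
qed

lemma hfun_unbiased:
  "hfun rho \<theta> (\<lambda>j. centred (unbiased_vec t j)) W
     = trace (W ** Ginv) + K * quad2 w11 w12 w22 (t 1) (t 2)
     + 2 * sqrt (w11 * w22 - w12^2) * \<bar>r*e/K - (t 1 * u 1 + t 2 * u 2)\<bar>"
proof -
  let ?E = "r*e/K - (t 1 * u 1 + t 2 * u 2)"
  have Z: "ZmatX rho \<theta> (\<lambda>j. centred (unbiased_vec t j)) =
      mat2 (Complex (Ginv$1$1 + K * t 1 * t 1) 0) (Complex (Ginv$1$2 + K * t 2 * t 1) (- ?E))
           (Complex (Ginv$2$1 + K * t 1 * t 2) ?E) (Complex (Ginv$2$2 + K * t 2 * t 2) 0)"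
    by (simp add: vec_eq_iff forall_2 ZmatX_def trace_state_unbiased_mult s_cross_unbiased_vec
        cross_skew[of "unbiased_vec t 2" "unbiased_vec t 1"])
  have "trace (W ** ReM (ZmatX rho \<theta> (\<lambda>j. centred (unbiased_vec t j))))
      = trace (W ** Ginv) + K * quad2 w11 w12 w22 (t 1) (t 2)"
    by (subst (2) mat2_eta)
      (simp add: Z ReM_mat2 W trace_mat2_mult quad2_def Ginv_sym[of 2 1] algebra_simps power2_eq_square)
  moreover have "ImM (ZmatX rho \<theta> (\<lambda>j. centred (unbiased_vec t j))) = mat2 0 (- ?E) ?E 0"
    by (simp add: Z ImM_mat2)
  ultimately show ?thesis
    unfolding hfun_def by (simp only: TrAbs_W_mult_antisymmetric)
qed

lemma CH_eq_holevo_formula: "CH rho \<theta> W = holevo_formula (CS rho \<theta> W) (CR rho \<theta> W) (CZ rho \<theta> W)"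
proof -
  define c where "c = sqrt (w11 * w22 - w12^2)"
  define A where "A = quad2 w22 (-w12) w11 (u 1) (u 2) / K"
  define f where
    "f t1 t2 = trace (W ** Ginv) + K * quad2 w11 w12 w22 t1 t2 + 2*c*\<bar>r*e/K - (t1 * u 1 + t2 * u 2)\<bar>"
    for t1 t2
  define m where "m = holevo_formula (trace (W ** Ginv)) (trace (W ** Ginv) - A + 2*c*\<bar>r*e/K\<bar>)
                                    (trace (W ** Ginv) + 2*c*\<bar>r*e/K\<bar>)"
  note min = quad2_abs_objective_min[OF W_pos K_pos,
      where C = "trace (W ** Ginv)" and E = "r*e/K" and p = "u 1" and q = "u 2"]
  have m_le: "m \<le> f t1 t2" for t1 t2
    unfolding f_def m_def c_def A_def by (rule min(1))
  obtain t1 t2 where "f t1 t2 = m"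
    using min(2) unfolding f_def m_def c_def A_def by blast
  have "(\<lambda>X. hfun rho \<theta> X W) ` locally_unbiased rho \<theta> = range (\<lambda>t::2 \<Rightarrow> real. f (t 1) (t 2))"
    by (simp add: locally_unbiased_eq image_image hfun_unbiased f_def c_def)
  then have "CH rho \<theta> W = Inf (range (\<lambda>t::2 \<Rightarrow> real. f (t 1) (t 2)))"
    by (simp add: CH_def)
  also have "\<dots> = m"
  proof (rule cInf_eq_minimum)
    show "m \<in> range (\<lambda>t::2 \<Rightarrow> real. f (t 1) (t 2))"
      using \<open>f t1 t2 = m\<close> by (intro image_eqI[of _ _ "\<lambda>j::2. if j = 1 then t1 else t2"]) auto
  qed (use m_le in auto)
  finally have "CH rho \<theta> W = m" .
  then show ?thesis by (simp add: m_def CS_eq CR_eq CZ_eq A_def c_def)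
qed

end

end

theorem theorem1:
  fixes rho :: "real^2 \<Rightarrow> complex^2^2" and \<Theta> :: "(real^2) set"
    and \<theta> :: "real^2" and W :: "real^2^2"
  assumes "open \<Theta>"
    and "\<forall>t\<in>\<Theta>. strictly_positive (rho t) \<and> trace (rho t) = 1"
    and "\<forall>t\<in>\<Theta>. rho differentiable (at t)"
    and "continuous_on \<Theta> (\<lambda>t. frechet_derivative rho (at t))"
    and "\<forall>t\<in>\<Theta>. \<forall>a b::real. a *\<^sub>R pder rho t 1 + b *\<^sub>R pder rho t 2 = 0 \<longrightarrow> a = 0 \<and> b = 0"
    and "\<theta> \<in> \<Theta>"
    and "transpose W = W"
    and "\<forall>v::real^2. v \<noteq> 0 \<longrightarrow> 0 < v \<bullet> (W *v v)"
  shows "CH rho \<theta> W =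
    (if CR rho \<theta> W \<ge> (CZ rho \<theta> W + CS rho \<theta> W) / 2 then CR rho \<theta> W
     else CR rho \<theta> W + Sterm rho \<theta> W)"
proof -
  \<comment> \<open>Only first derivatives at \<open>\<theta>\<close> enter.\<close>
  obtain s where s: "rho \<theta> = bloch (1/2) ((1/2) *\<^sub>R s)" "s \<bullet> s < 1"
    using density_matrix_obtain_bloch assms(2,6) by blast
  have "\<forall>t\<in>\<Theta>. hermitian (rho t) \<and> trace (rho t) = 1"
    using assms(2) strictly_positive_def by auto
  then obtain d where d: "\<And>i. pder rho \<theta> i = bloch 0 ((1/2) *\<^sub>R d i)"
    using pder_hermitian_traceless[OF assms(1,6)] assms(3,6)
    by (metis traceless_hermitian_family_obtain_bloch)
  have "cross3 (d 1) (d 2) \<noteq> 0"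
  proof
    assume "cross3 (d 1) (d 2) = 0"
    then obtain a b where ab: "a \<noteq> 0 \<or> b \<noteq> 0" "a *\<^sub>R d 1 + b *\<^sub>R d 2 = 0"
      by (rule cross3_eq_0_linear_dependent)
    have "a *\<^sub>R pder rho \<theta> 1 + b *\<^sub>R pder rho \<theta> 2 = bloch 0 ((1/2) *\<^sub>R (a *\<^sub>R d 1 + b *\<^sub>R d 2))"
      by (simp add: d scaleR_bloch bloch_add algebra_simps)
    with ab assms(5,6) show False by (simp add: bloch_zero)
  qed
  with s d interpret qubit_model_at rho \<theta> s d by unfold_locales
  obtain w11 w12 w22 where "W = mat2 w11 w12 w12 w22" "w11 > 0" "w11 * w22 - w12^2 > 0"
    using pos_def_mat2_obtain[OF assms(7,8)] by blast
  from CH_eq_holevo_formula[OF this] show ?thesis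
    by (simp add: holevo_formula_def Sterm_def)
qed

end
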